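(* Let users belong to one of three disjoint sets $T_1,T_2,T_3$ with probabilities $\pi_1,\pi_2,\pi_3>0$ ($\pi_1+\pi_2+\pi_3=1$), let $T_{12}=T_1\cup T_2$, and let the publisher's data reveal whether a user is in $T_{12}$ or $T_3$. Fix a density $f$ of the highest competing bid (independent of the user) and observed average bids $b_{12}>b_3\ge0$ of the advertiser on users in $T_{12}$ and $T_3$ respectively. Let $b=(\pi_1+\pi_2)b_{12}+\pi_3b_3$ and $$V_{\max}=(\pi_1+\pi_2)\int_b^{b_{12}}(b_{12}-p)f(p)\,dp+\pi_3\int_{b_3}^{b}(p-b_3)f(p)\,dp.$$ Then for every $V\in[0,V_{\max}]$ there exist nonnegative values $v_1,v_2,v_3$ of the advertiser for users in $T_1,T_2,T_3$ and a private targeting signal of the advertiser (indicating whether the user lies in a subset $S_1\subseteq T_1$ consisting of a random fraction $\alpha\in[0,1]$ of $T_1$) such that, when the advertiser bids her expected value given her information, her average bids on $T_{12}$ and $T_3$ users are $b_{12}$ and $b_3$, and her value for the publisher's data is exactly $V$. In particular, the advertiser's value for the data cannot be inferred from her average bids and the competing bid distribution.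
   Context: Independent private values, second-price auction; the advertiser's value for a user in $T_i$ is $v_i$, and she bids her conditional expected value given all information available to her. Her value for the publisher's data is her expected utility with the publisher's data minus her expected utility without it (with her own private signal available in both cases). *)

theory Defs
  imports "HOL-Analysis.Analysis"
begin

text \<open>Users are modelled by finitely many atoms (i, s): i \<in> {1,2,3} is the type
  (user in T_i), s records whether the user lies in the advertiser's targeting set
  S_1 \<subseteq> T_1 (a random fraction alpha of T_1).\<close>

definition atoms :: "(nat \<times> bool) set" where
  "atoms = {(1, True), (1, False), (2, False), (3, False)}"

definition mass :: "real \<Rightarrow> real \<Rightarrow> real \<Rightarrow> real \<Rightarrow> nat \<times> bool \<Rightarrow> real" where
  "mass p1 p2 p3 \<alpha> u =
     (if fst u = 1 then (if snd u then \<alpha> * p1 else (1 - \<alpha>) * p1)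
      else if fst u = 2 then p2 else p3)"

definition val :: "real \<Rightarrow> real \<Rightarrow> real \<Rightarrow> nat \<times> bool \<Rightarrow> real" where
  "val v1 v2 v3 u = (if fst u = 1 then v1 else if fst u = 2 then v2 else v3)"

text \<open>Information of the advertiser: her own private signal only, or her
  signal together with the publisher's data (T_12 versus T_3).\<close>
definition own_info :: "nat \<times> bool \<Rightarrow> bool" where
  "own_info u = snd u"

definition full_info :: "nat \<times> bool \<Rightarrow> bool \<times> bool" where
  "full_info u = (snd u, fst u = 3)"

definition cexp :: "('u \<Rightarrow> real) \<Rightarrow> ('u \<Rightarrow> real) \<Rightarrow> ('u \<Rightarrow> 's) \<Rightarrow> 'u set \<Rightarrow> 'u \<Rightarrow> real" where
  "cexp P v I U u =
     (\<Sum>x\<in>{y\<in>U. I y = I u}. P x * v x) / (\<Sum>x\<in>{y\<in>U. I y = I u}. P x)"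

text \<open>Expected utility in a second-price auction of bidding \<beta> with value w, when the
  highest competing bid has density f: E[(w - p) 1{p < \<beta>}].\<close>
definition auction_util :: "(real \<Rightarrow> real) \<Rightarrow> real \<Rightarrow> real \<Rightarrow> real" where
  "auction_util f \<beta> w = (LINT p:{..<\<beta>}|lborel. (w - p) * f p)"

definition exp_util :: "(real \<Rightarrow> real) \<Rightarrow> ('u \<Rightarrow> real) \<Rightarrow> ('u \<Rightarrow> real) \<Rightarrow> ('u \<Rightarrow> 's) \<Rightarrow> 'u set \<Rightarrow> real" where
  "exp_util f P v I U = (\<Sum>u\<in>U. P u * auction_util f (cexp P v I U u) (v u))"

definition avg_bid :: "('u \<Rightarrow> real) \<Rightarrow> ('u \<Rightarrow> real) \<Rightarrow> ('u \<Rightarrow> 's) \<Rightarrow> 'u set \<Rightarrow> 'u set \<Rightarrow> real" where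
  "avg_bid P v I U W = (\<Sum>u\<in>U \<inter> W. P u * cexp P v I U u) / (\<Sum>u\<in>U \<inter> W. P u)"

definition T12 :: "(nat \<times> bool) set" where "T12 = {u. fst u \<in> {1, 2}}"
definition T3 :: "(nat \<times> bool) set" where "T3 = {u. fst u = 3}"

definition data_value :: "(real \<Rightarrow> real) \<Rightarrow> real \<Rightarrow> real \<Rightarrow> real \<Rightarrow> real \<Rightarrow>
    real \<Rightarrow> real \<Rightarrow> real \<Rightarrow> real" where
  "data_value f p1 p2 p3 \<alpha> v1 v2 v3 =
     exp_util f (mass p1 p2 p3 \<alpha>) (val v1 v2 v3) full_info atoms
     - exp_util f (mass p1 p2 p3 \<alpha>) (val v1 v2 v3) own_info atoms"

end

theory Submission
  imports Defs
begin

(* Fix the values v3 = b3 and move along a one-parameter family of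
   advertisers indexed by t in [0,1]: the targeted fraction of T1 is alpha = t, the value
   on T2 falls linearly from b12 to b3, and the value on T1 rises so that the pooled
   T12 bid stays p1 v1 + p2 v2 = (p1 + p2) b12.  With the publisher's data she then always
   bids b12 on average on T12 and b3 on T3.  At t = 0 her own signal is void, so the data
   is worth exactly the bound V_max; at t = 1 her signal already separates T1 from the
   users of value b3, so the data is worth nothing.  The data value is continuous in t,
   and the intermediate value theorem yields every V in [0, V_max]. *)

definition mass_upto :: "(real \<Rightarrow> real) \<Rightarrow> real \<Rightarrow> real" where
  "mass_upto f x = integral {0..x} f"

definition moment_upto :: "(real \<Rightarrow> real) \<Rightarrow> real \<Rightarrow> real" where
  "moment_upto f x = integral {0..x} (\<lambda>p. p * f p)"

lemma set_integrable_linear_density: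
  fixes f :: "real \<Rightarrow> real"
  assumes "integrable lborel f"
  shows "set_integrable lborel {x..y} (\<lambda>p. (w - p) * f p)"
proof -
  have "integrable lborel (\<lambda>p. (\<bar>w\<bar> + \<bar>x\<bar> + \<bar>y\<bar>) * f p)" using assms by auto
  then show ?thesis unfolding set_integrable_def
  proof (rule Bochner_Integration.integrable_bound)
    show "(\<lambda>p. indicator {x..y} p *\<^sub>R ((w - p) * f p)) \<in> borel_measurable lborel"
      using assms by measurable
    have "norm (indicator {x..y} p *\<^sub>R ((w - p) * f p)) \<le> norm ((\<bar>w\<bar> + \<bar>x\<bar> + \<bar>y\<bar>) * f p)" for p
      by (cases "p \<in> {x..y}") (auto simp: abs_mult intro!: mult_right_mono)
    then show "AE p in lborel. norm (indicator {x..y} p *\<^sub>R ((w - p) * f p))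
                 \<le> norm ((\<bar>w\<bar> + \<bar>x\<bar> + \<bar>y\<bar>) * f p)"
      by simp
  qed
qed

lemma
  fixes f :: "real \<Rightarrow> real"
  assumes "integrable lborel f"
  shows density_integrable_on: "f integrable_on {x..y}"
    and moment_integrable_on: "(\<lambda>p. p * f p) integrable_on {x..y}"
    and interval_lint_eq: "(LINT p:{x..y}|lborel. (w - p) * f p)
           = w * integral {x..y} f - integral {x..y} (\<lambda>p. p * f p)"
proof -
  have HK: "(\<lambda>p. (w - p) * f p) integrable_on {x..y}"
    "(LINT p:{x..y}|lborel. (w - p) * f p) = integral {x..y} (\<lambda>p. (w - p) * f p)" for w
    using set_borel_integral_eq_integral[OF set_integrable_linear_density[OF assms]] by auto
  have "(\<lambda>p. (1 - p) * f p - (0 - p) * f p) integrable_on {x..y}"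
    using integrable_diff[OF HK(1) HK(1)] .
  then show fi: "f integrable_on {x..y}" by (simp add: algebra_simps)
  show mi: "(\<lambda>p. p * f p) integrable_on {x..y}" using integrable_neg[OF HK(1)[of 0]] by simp
  have "integral {x..y} (\<lambda>p. (w - p) * f p) = integral {x..y} (\<lambda>p. w * f p - p * f p)"
    by (simp add: algebra_simps)
  also have "\<dots> = w * integral {x..y} f - integral {x..y} (\<lambda>p. p * f p)"
    using fi mi by (simp add: integral_diff integrable_on_mult_right)
  finally show "(LINT p:{x..y}|lborel. (w - p) * f p)
      = w * integral {x..y} f - integral {x..y} (\<lambda>p. p * f p)" using HK(2) by simp
qed

text \<open>Utility of bidding \<beta> \<ge> 0 in terms of the two cumulative integrals; competing
  bids are nonnegative, and the endpoint \<beta> is a null set.\<close>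
lemma auction_util_eq:
  fixes f :: "real \<Rightarrow> real"
  assumes f_int: "integrable lborel f" and f_neg: "\<forall>p. p < 0 \<longrightarrow> f p = 0" and "0 \<le> \<beta>"
  shows "auction_util f \<beta> w = w * mass_upto f \<beta> - moment_upto f \<beta>"
proof -
  have "(LINT p:{..<\<beta>}|lborel. (w - p) * f p) = (LINT p:{0..<\<beta>}|lborel. (w - p) * f p)"
    unfolding set_lebesgue_integral_def
    by (rule Bochner_Integration.integral_cong) (use f_neg in \<open>auto simp: indicator_def\<close>)
  also have "\<dots> = (LINT p:{0..\<beta>}|lborel. (w - p) * f p)"
  proof (rule set_integral_cong_set)
    show "set_borel_measurable lborel {0..\<beta>} (\<lambda>p. (w - p) * f p)"
      "set_borel_measurable lborel {0..<\<beta>} (\<lambda>p. (w - p) * f p)"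
      unfolding set_borel_measurable_def using f_int by measurable
    show "AE x in lborel. (x \<in> {0..\<beta>}) = (x \<in> {0..<\<beta>})"
      using AE_lborel_singleton[of \<beta>] by eventually_elim auto
  qed
  finally show ?thesis
    unfolding auction_util_def mass_upto_def moment_upto_def interval_lint_eq[OF f_int] .
qed

lemma interval_lint_eq_util_diff:
  fixes f :: "real \<Rightarrow> real"
  assumes f_int: "integrable lborel f" and f_neg: "\<forall>p. p < 0 \<longrightarrow> f p = 0"
    and "0 \<le> x" "x \<le> y"
  shows "(LINT p:{x..y}|lborel. (w - p) * f p) = auction_util f y w - auction_util f x w"
proof -
  have split: "integral {0..y} h = integral {0..x} h + integral {x..y} h"
    if "h integrable_on {0..y}" for h :: "real \<Rightarrow> real"
    using Henstock_Kurzweil_Integration.integral_combine[OF assms(3,4) that] by simp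
  have "0 \<le> y" using assms(3,4) by linarith
  then show ?thesis
    using split[OF density_integrable_on[OF f_int]] split[OF moment_integrable_on[OF f_int]]
    unfolding interval_lint_eq[OF f_int] auction_util_eq[OF f_int f_neg \<open>0 \<le> x\<close>]
      auction_util_eq[OF f_int f_neg \<open>0 \<le> y\<close>] mass_upto_def moment_upto_def
    by (simp add: algebra_simps)
qed

lemma continuous_on_auction_util:
  fixes f :: "real \<Rightarrow> real" and \<beta> w :: "'a::topological_space \<Rightarrow> real"
  assumes f_int: "integrable lborel f" and f_neg: "\<forall>p. p < 0 \<longrightarrow> f p = 0"
    and "compact S" "continuous_on S \<beta>" "continuous_on S w" "\<forall>t\<in>S. 0 \<le> \<beta> t"
  shows "continuous_on S (\<lambda>t. auction_util f (\<beta> t) (w t))"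
proof -
  have "bounded (\<beta> ` S)" using assms(3,4) by (simp add: compact_continuous_image compact_imp_bounded)
  then obtain M where "\<forall>t\<in>S. \<bar>\<beta> t\<bar> \<le> M" unfolding bounded_real by blast
  then have M: "\<forall>t\<in>S. \<beta> t \<le> M" by (auto dest: abs_le_D1)
  have bids: "\<beta> ` S \<subseteq> {0..M}" using M assms(6) by auto
  have "continuous_on {0..M} (mass_upto f)" "continuous_on {0..M} (moment_upto f)"
    unfolding mass_upto_def moment_upto_def
    by (intro indefinite_integral_continuous_1 density_integrable_on moment_integrable_on f_int)+
  then have "continuous_on S (\<lambda>t. mass_upto f (\<beta> t))" "continuous_on S (\<lambda>t. moment_upto f (\<beta> t))"
    using continuous_on_compose2[OF _ assms(4) bids] by blast+
  then have "continuous_on S (\<lambda>t. w t * mass_upto f (\<beta> t) - moment_upto f (\<beta> t))"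
    using assms(5) by (intro continuous_intros)
  moreover have "auction_util f (\<beta> t) (w t) = w t * mass_upto f (\<beta> t) - moment_upto f (\<beta> t)"
    if "t \<in> S" for t
    using that assms(6) by (simp add: auction_util_eq[OF f_int f_neg])
  ultimately show ?thesis using continuous_on_cong by force
qed

lemma sum_atoms: "(\<Sum>u\<in>atoms. g u) = g (1,True) + g (1,False) + g (2,False) + g (3,False)"
  by (simp add: atoms_def add.assoc)

lemma information_classes:
  "{y\<in>atoms. full_info y = full_info (1,True)} = {(1,True)}"
  "{y\<in>atoms. full_info y = full_info (1,False)} = {(1,False),(2,False)}"
  "{y\<in>atoms. full_info y = full_info (2,False)} = {(1,False),(2,False)}"
  "{y\<in>atoms. full_info y = full_info (3,False)} = {(3,False)}"
  "{y\<in>atoms. own_info y = own_info (1,True)} = {(1,True)}"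
  "{y\<in>atoms. own_info y = own_info (1,False)} = {(1,False),(2,False),(3,False)}"
  "{y\<in>atoms. own_info y = own_info (2,False)} = {(1,False),(2,False),(3,False)}"
  "{y\<in>atoms. own_info y = own_info (3,False)} = {(1,False),(2,False),(3,False)}"
  "atoms \<inter> T12 = {(1,True),(1,False),(2,False)}"
  "atoms \<inter> T3 = {(3,False)}"
  by (auto simp: atoms_def full_info_def own_info_def T12_def T3_def)

text \<open>Targeted T1 users are identified by the advertiser's own signal, so their bid does
  not depend on the data and they drop out of its value.  With the data, the other T12
  users are pooled at bid d; without it, all untargeted users are pooled at bid c.\<close>
lemma data_value_eq:
  fixes p1 p2 p3 \<alpha> v1 v2 v3 :: real and f :: "real \<Rightarrow> real"
  assumes "p3 > 0"
  defines "d \<equiv> ((1-\<alpha>)*p1* v1 + p2* v2) / ((1-\<alpha>)*p1 + p2)"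
    and "c \<equiv> ((1-\<alpha>)*p1* v1 + p2* v2 + p3* v3) / ((1-\<alpha>)*p1 + p2 + p3)"
  shows "data_value f p1 p2 p3 \<alpha> v1 v2 v3 =
      (1-\<alpha>)*p1 * (auction_util f d v1 - auction_util f c v1)
    + p2 * (auction_util f d v2 - auction_util f c v2)
    + p3 * (auction_util f v3 v3 - auction_util f c v3)"
  using assms(1)
  unfolding data_value_def exp_util_def sum_atoms cexp_def information_classes d_def c_def
  by (simp add: mass_def val_def information_classes[simplified] algebra_simps)

text \<open>Conditional expectations preserve averages: the average bid on T12 is the average
  value on T12, and T3 users are fully identified by the data.\<close>
lemma avg_bid_T12:
  assumes "p1 > 0" "p2 > 0" "\<alpha> \<le> 1"
  shows "avg_bid (mass p1 p2 p3 \<alpha>) (val v1 v2 v3) full_info atoms T12 = (p1 * v1 + p2 * v2) / (p1 + p2)"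
proof -
  have "(1-\<alpha>)*p1 + p2 > 0" using assms by (simp add: add_nonneg_pos)
  then show ?thesis
    unfolding avg_bid_def information_classes cexp_def
    by (simp add: mass_def val_def information_classes[simplified] add_divide_distrib[symmetric]
        distrib_right[symmetric]) (simp add: algebra_simps)
qed

lemma avg_bid_T3:
  assumes "p3 > 0"
  shows "avg_bid (mass p1 p2 p3 \<alpha>) (val v1 v2 v3) full_info atoms T3 = v3"
  using assms unfolding avg_bid_def information_classes cexp_def by (simp add: mass_def val_def information_classes[simplified])


definition path_v1 :: "real \<Rightarrow> real \<Rightarrow> real \<Rightarrow> real \<Rightarrow> real \<Rightarrow> real" where
  "path_v1 p1 p2 b12 b3 t = b12 + p2 * t * (b12 - b3) / p1"

definition path_v2 :: "real \<Rightarrow> real \<Rightarrow> real \<Rightarrow> real" where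
  "path_v2 b12 b3 t = b12 - t * (b12 - b3)"

definition path_value :: "(real \<Rightarrow> real) \<Rightarrow> real \<Rightarrow> real \<Rightarrow> real \<Rightarrow> real \<Rightarrow> real \<Rightarrow> real \<Rightarrow> real" where
  "path_value f p1 p2 p3 b12 b3 t =
     data_value f p1 p2 p3 t (path_v1 p1 p2 b12 b3 t) (path_v2 b12 b3 t) b3"

lemma path_values_nonneg:
  assumes "p1 > 0" "p2 > 0" "0 \<le> b3" "b3 \<le> b12" "0 \<le> t" "t \<le> 1"
  shows "0 \<le> path_v1 p1 p2 b12 b3 t" "0 \<le> path_v2 b12 b3 t"
proof -
  show "0 \<le> path_v1 p1 p2 b12 b3 t" using assms by (simp add: path_v1_def)
  have "t * (b12 - b3) \<le> b12 - b3" using assms mult_left_le_one_le[of "b12 - b3" t] by simp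
  then show "0 \<le> path_v2 b12 b3 t" using assms by (simp add: path_v2_def)
qed

text \<open>Along the family the average bids match the observed ones, because the mean value
  on T12 stays at b12.\<close>
lemma path_avg_bids:
  assumes "p1 > 0" "p2 > 0" "p3 > 0" "t \<le> 1"
  shows "avg_bid (mass p1 p2 p3 t) (val (path_v1 p1 p2 b12 b3 t) (path_v2 b12 b3 t) b3)
           full_info atoms T12 = b12"
    and "avg_bid (mass p1 p2 p3 t) (val (path_v1 p1 p2 b12 b3 t) (path_v2 b12 b3 t) b3)
           full_info atoms T3 = b3"
proof -
  have "p1 * path_v1 p1 p2 b12 b3 t + p2 * path_v2 b12 b3 t = (p1 + p2) * b12"
    using assms(1) by (simp add: path_v1_def path_v2_def field_simps)
  then show "avg_bid (mass p1 p2 p3 t) (val (path_v1 p1 p2 b12 b3 t) (path_v2 b12 b3 t) b3)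
      full_info atoms T12 = b12"
    using assms by (simp add: avg_bid_T12)
  show "avg_bid (mass p1 p2 p3 t) (val (path_v1 p1 p2 b12 b3 t) (path_v2 b12 b3 t) b3)
      full_info atoms T3 = b3"
    using assms(3) by (rule avg_bid_T3)
qed

text \<open>At t = 1 all of T1 is targeted and the remaining users have value b3, so the data is
  worthless.\<close>
lemma path_value_end:
  assumes "p2 > 0" "p3 > 0"
  shows "path_value f p1 p2 p3 b12 b3 1 = 0"
proof -
  have "(p2 * b3) / p2 = b3" "(p2 * b3 + p3 * b3) / (p2 + p3) = b3"
    using assms by (simp_all add: distrib_right[symmetric])
  then show ?thesis
    using assms by (simp add: path_value_def data_value_eq path_v2_def)
qed

text \<open>At t = 0 the signal is void: with the data she bids b12 and b3, without it the
  pooled bid b, and the utility difference is the bound V_max of the theorem.\<close>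
lemma path_value_start:
  fixes f :: "real \<Rightarrow> real"
  assumes f_int: "integrable lborel f" and f_neg: "\<forall>p. p < 0 \<longrightarrow> f p = 0"
    and "p1 > 0" "p2 > 0" "p3 > 0" "p1 + p2 + p3 = 1" "0 \<le> b3" "b3 \<le> b12"
  defines "b \<equiv> (p1 + p2) * b12 + p3 * b3"
  shows "path_value f p1 p2 p3 b12 b3 0 =
           (p1 + p2) * (LINT p:{b..b12}|lborel. (b12 - p) * f p)
           + p3 * (LINT p:{b3..b}|lborel. (p - b3) * f p)"
proof -
  have "b3 = (p1 + p2) * b3 + p3 * b3" "b12 = (p1 + p2) * b12 + p3 * b12"
    using assms(6) by (metis distrib_right mult_1)+
  then have b_between: "b3 \<le> b" "b \<le> b12"
    using assms(3-8) unfolding b_def by (smt (verit) mult_left_mono)+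
  have pooled: "(p1 * b12 + p2 * b12) / (p1 + p2) = b12"
      "(p1 * b12 + p2 * b12 + p3 * b3) / (p1 + p2 + p3) = b"
    using assms(3,4,6) by (simp_all add: b_def distrib_right[symmetric])
  have "path_value f p1 p2 p3 b12 b3 0 =
      (p1 + p2) * (auction_util f b12 b12 - auction_util f b b12)
      + p3 * (auction_util f b3 b3 - auction_util f b b3)"
    using assms(5) by (simp add: path_value_def data_value_eq path_v1_def path_v2_def pooled
        distrib_right)
  moreover have "(LINT p:{b..b12}|lborel. (b12 - p) * f p) = auction_util f b12 b12 - auction_util f b b12"
    using assms(7) b_between by (intro interval_lint_eq_util_diff[OF f_int f_neg]) auto
  moreover have "(LINT p:{b3..b}|lborel. (b3 - p) * f p) = auction_util f b b3 - auction_util f b3 b3"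
    using assms(7) b_between by (intro interval_lint_eq_util_diff[OF f_int f_neg]) auto
  moreover have "(LINT p:{b3..b}|lborel. (p - b3) * f p) = - (LINT p:{b3..b}|lborel. (b3 - p) * f p)"
  proof -
    have "(\<lambda>p. (p - b3) * f p) = (\<lambda>p. (-1) * ((b3 - p) * f p))" by (simp add: fun_eq_iff algebra_simps)
    then show ?thesis by (simp only: set_integral_mult_right)
  qed
  ultimately show ?thesis by simp
qed

text \<open>The value of the data varies continuously along the family; the pooled bids have
  positive weights on [0,1], so they depend continuously on t.\<close>
lemma path_value_continuous:
  fixes f :: "real \<Rightarrow> real"
  assumes f_int: "integrable lborel f" and f_neg: "\<forall>p. p < 0 \<longrightarrow> f p = 0"
    and "p1 > 0" "p2 > 0" "p3 > 0" "0 \<le> b3" "b3 \<le> b12"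
  shows "continuous_on {0..1} (path_value f p1 p2 p3 b12 b3)"
proof -
  define v1 where "v1 = path_v1 p1 p2 b12 b3"
  define v2 where "v2 = path_v2 b12 b3"
  define d where "d t = ((1-t)*p1 * v1 t + p2 * v2 t) / ((1-t)*p1 + p2)" for t
  define c where "c t = ((1-t)*p1 * v1 t + p2 * v2 t + p3 * b3) / ((1-t)*p1 + p2 + p3)" for t
  have weights: "0 \<le> (1-t)*p1" "(1-t)*p1 + p2 \<noteq> 0" "(1-t)*p1 + p2 + p3 \<noteq> 0"
    if "t \<in> {0..1}" for t
  proof -
    show "0 \<le> (1-t)*p1" using that assms(3) by simp
    then show "(1-t)*p1 + p2 \<noteq> 0" "(1-t)*p1 + p2 + p3 \<noteq> 0" using assms(4,5) by linarith+
  qed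
  have nonneg_values: "0 \<le> v1 t" "0 \<le> v2 t" if "t \<in> {0..1}" for t
    using that path_values_nonneg[OF assms(3,4,6,7)] by (auto simp: v1_def v2_def)
  have nonneg_bids: "0 \<le> d t" "0 \<le> c t" if "t \<in> {0..1}" for t
    using weights[OF that] nonneg_values[OF that] assms(4-6) unfolding d_def c_def
    by (auto intro!: divide_nonneg_nonneg add_nonneg_nonneg mult_nonneg_nonneg)
  have "continuous_on {0..1} v1" "continuous_on {0..1} v2"
    unfolding v1_def v2_def path_v1_def[abs_def] path_v2_def[abs_def]
    using assms(3) by (auto intro!: continuous_intros)
  then have "continuous_on {0..1} d" "continuous_on {0..1} c"
    unfolding d_def c_def using weights by (auto intro!: continuous_intros)
  then have "continuous_on {0..1} (\<lambda>t.
      (1-t)*p1 * (auction_util f (d t) (v1 t) - auction_util f (c t) (v1 t))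
    + p2 * (auction_util f (d t) (v2 t) - auction_util f (c t) (v2 t))
    + p3 * (auction_util f b3 b3 - auction_util f (c t) b3))"
    using nonneg_bids \<open>continuous_on {0..1} v1\<close> \<open>continuous_on {0..1} v2\<close>
    by (intro continuous_intros continuous_on_auction_util[OF f_int f_neg]) auto
  moreover have "path_value f p1 p2 p3 b12 b3 t =
      (1-t)*p1 * (auction_util f (d t) (v1 t) - auction_util f (c t) (v1 t))
    + p2 * (auction_util f (d t) (v2 t) - auction_util f (c t) (v2 t))
    + p3 * (auction_util f b3 b3 - auction_util f (c t) b3)" for t
    unfolding path_value_def data_value_eq[OF assms(5)] d_def c_def v1_def v2_def ..
  ultimately show ?thesis by simp
qed

theorem mainTheorem17:
  fixes p1 p2 p3 b12 b3 V :: real and f :: "real \<Rightarrow> real"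
  assumes "p1 > 0" "p2 > 0" "p3 > 0" "p1 + p2 + p3 = 1"
    and "\<forall>p. f p \<ge> 0" "\<forall>p. p < 0 \<longrightarrow> f p = 0"
    and "integrable lborel f" "(\<integral>p. f p \<partial>lborel) = 1"
    and "b12 > b3" "b3 \<ge> 0"
    and "0 \<le> V"
    and "V \<le> (let b = (p1 + p2) * b12 + p3 * b3 in
               (p1 + p2) * (LINT p:{b..b12}|lborel. (b12 - p) * f p)
               + p3 * (LINT p:{b3..b}|lborel. (p - b3) * f p))"
  shows "\<exists>v1 v2 v3 \<alpha>. 0 \<le> v1 \<and> 0 \<le> v2 \<and> 0 \<le> v3 \<and> 0 \<le> \<alpha> \<and> \<alpha> \<le> 1 \<and>
     avg_bid (mass p1 p2 p3 \<alpha>) (val v1 v2 v3) full_info atoms T12 = b12 \<and>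
     avg_bid (mass p1 p2 p3 \<alpha>) (val v1 v2 v3) full_info atoms T3 = b3 \<and>
     data_value f p1 p2 p3 \<alpha> v1 v2 v3 = V"
proof -
  have "continuous_on {0..1} (path_value f p1 p2 p3 b12 b3)"
    using assms(1-3,6,7,9,10) by (intro path_value_continuous) auto
  moreover have "V \<le> path_value f p1 p2 p3 b12 b3 0"
    using assms(12) path_value_start[OF assms(7,6,1-4,10)] assms(9) by (simp add: Let_def)
  moreover have "path_value f p1 p2 p3 b12 b3 1 \<le> V"
    using assms(2,3,11) by (simp add: path_value_end)
  ultimately obtain t where t: "0 \<le> t" "t \<le> 1" "path_value f p1 p2 p3 b12 b3 t = V"
    using IVT2'[of "path_value f p1 p2 p3 b12 b3" 1 V 0] by auto
  define v1 v2 where "v1 = path_v1 p1 p2 b12 b3 t" and "v2 = path_v2 b12 b3 t"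
  have "0 \<le> v1" "0 \<le> v2"
    unfolding v1_def v2_def using path_values_nonneg[OF assms(1,2,10) _ t(1,2)] assms(9) by auto
  moreover have "avg_bid (mass p1 p2 p3 t) (val v1 v2 b3) full_info atoms T12 = b12"
    "avg_bid (mass p1 p2 p3 t) (val v1 v2 b3) full_info atoms T3 = b3"
    unfolding v1_def v2_def using path_avg_bids[OF assms(1-3) t(2)] by auto
  moreover have "data_value f p1 p2 p3 t v1 v2 b3 = V"
    using t(3) by (simp add: path_value_def v1_def v2_def)
  ultimately show ?thesis using t(1,2) assms(10) by blast
qed

end
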